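(* Let $\Phi$ be a point process on $\mathbb{R}^d$ with Radon mean measure $\alpha(\cdot)=\mathbb{E}\Phi(\cdot)$. (i) If $\Phi$ is simple, has Radon second-order factorial moment measure $\alpha^{(2)}$, and $\Pr\{\Phi(B_1)=0,\Phi(B_2)=0\}\le \Pr\{\Phi(B_1)=0\}\Pr\{\Phi(B_2)=0\}$ for any two disjoint bounded Borel sets $B_1,B_2$, then $\Phi$ is $\nu$-weakly sub-Poisson, i.e. $\Pr\{\Phi(B)=0\}\le e^{-\alpha(B)}$ for all bounded Borel $B$. (ii) If $\alpha$ is diffuse (has no atoms) and $\Pr\{\Phi(B_1)=0,\Phi(B_2)=0\}\ge \Pr\{\Phi(B_1)=0\}\Pr\{\Phi(B_2)=0\}$ for any two disjoint bounded Borel sets $B_1,B_2$, then $\Phi$ is $\nu$-weakly super-Poisson, i.e. $\Pr\{\Phi(B)=0\}\ge e^{-\alpha(B)}$ for all bounded Borel $B$.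
   Context: A point process is simple if a.s. $\Phi(\{x\})\le 1$ for all $x$. The second-order factorial moment measure $\alpha^{(2)}$ is the measure on $(\mathbb{R}^d)^2$ with $\alpha^{(2)}(A)=\mathbb{E}\sum_{X\ne Y\in\Phi}\mathbf{1}((X,Y)\in A)$ (sum over ordered pairs of distinct points, counted with multiplicity). *)

theory Defs
  imports "HOL-Probability.Probability"
begin

text \<open>A realisation of a point process on the Euclidean space 'a is represented by its
multiplicity function m :: 'a => nat (m x = number of points of the configuration located at x),
which is locally finite: only finitely many points with nonzero multiplicity in each bounded set.\<close>

definition bdd_borel :: "'a::euclidean_space set \<Rightarrow> bool" where
  "bdd_borel B \<longleftrightarrow> B \<in> sets borel \<and> bounded B"

definition pp_count :: "('w \<Rightarrow> 'a \<Rightarrow> nat) \<Rightarrow> 'w \<Rightarrow> 'a set \<Rightarrow> nat" where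
  "pp_count \<Phi> \<omega> B = (\<Sum>x\<in>{x\<in>B. \<Phi> \<omega> x \<noteq> 0}. \<Phi> \<omega> x)"

definition point_process :: "'w measure \<Rightarrow> ('w \<Rightarrow> 'a::euclidean_space \<Rightarrow> nat) \<Rightarrow> bool" where
  "point_process M \<Phi> \<longleftrightarrow> prob_space M
     \<and> (\<forall>\<omega>\<in>space M. \<forall>B. bounded B \<longrightarrow> finite {x\<in>B. \<Phi> \<omega> x \<noteq> 0})
     \<and> (\<forall>B. bdd_borel B \<longrightarrow> (\<lambda>\<omega>. pp_count \<Phi> \<omega> B) \<in> measurable M (count_space UNIV))"

definition mean_measure :: "'w measure \<Rightarrow> ('w \<Rightarrow> 'a \<Rightarrow> nat) \<Rightarrow> 'a set \<Rightarrow> ennreal" where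
  "mean_measure M \<Phi> B = (\<integral>\<^sup>+\<omega>. of_nat (pp_count \<Phi> \<omega> B) \<partial>M)"

definition radon_mean :: "'w measure \<Rightarrow> ('w \<Rightarrow> 'a::euclidean_space \<Rightarrow> nat) \<Rightarrow> bool" where
  "radon_mean M \<Phi> \<longleftrightarrow> (\<forall>B. bdd_borel B \<longrightarrow> mean_measure M \<Phi> B < \<infinity>)"

definition diffuse_mean :: "'w measure \<Rightarrow> ('w \<Rightarrow> 'a \<Rightarrow> nat) \<Rightarrow> bool" where
  "diffuse_mean M \<Phi> \<longleftrightarrow> (\<forall>x. mean_measure M \<Phi> {x} = 0)"

definition simple_pp :: "'w measure \<Rightarrow> ('w \<Rightarrow> 'a \<Rightarrow> nat) \<Rightarrow> bool" where
  "simple_pp M \<Phi> \<longleftrightarrow> (AE \<omega> in M. \<forall>x. \<Phi> \<omega> x \<le> 1)"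

text \<open>Sum over ordered pairs of distinct points (counted with multiplicity) lying in A:
a point of multiplicity k at x contributes k*(k-1) pairs (x,x); points at x \<noteq> y
with multiplicities k, l contribute k*l pairs (x,y).\<close>
definition pp_count2 :: "('w \<Rightarrow> 'a \<Rightarrow> nat) \<Rightarrow> 'w \<Rightarrow> ('a \<times> 'a) set \<Rightarrow> nat" where
  "pp_count2 \<Phi> \<omega> A =
     (\<Sum>p\<in>{p\<in>A. \<Phi> \<omega> (fst p) \<noteq> 0 \<and> \<Phi> \<omega> (snd p) \<noteq> 0}.
        (if fst p = snd p then \<Phi> \<omega> (fst p) * (\<Phi> \<omega> (fst p) - 1)
         else \<Phi> \<omega> (fst p) * \<Phi> \<omega> (snd p)))"

definition fact_moment2 :: "'w measure \<Rightarrow> ('w \<Rightarrow> 'a \<Rightarrow> nat) \<Rightarrow> ('a \<times> 'a) set \<Rightarrow> ennreal" where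
  "fact_moment2 M \<Phi> A = (\<integral>\<^sup>+\<omega>. of_nat (pp_count2 \<Phi> \<omega> A) \<partial>M)"

definition radon_fact2 :: "'w measure \<Rightarrow> ('w \<Rightarrow> 'a::euclidean_space \<Rightarrow> nat) \<Rightarrow> bool" where
  "radon_fact2 M \<Phi> \<longleftrightarrow> (\<forall>A. bdd_borel A \<longrightarrow> fact_moment2 M \<Phi> A < \<infinity>)"

definition void_prob :: "'w measure \<Rightarrow> ('w \<Rightarrow> 'a \<Rightarrow> nat) \<Rightarrow> 'a set \<Rightarrow> real" where
  "void_prob M \<Phi> B = measure M {\<omega>\<in>space M. pp_count \<Phi> \<omega> B = 0}"

definition void_prob2 :: "'w measure \<Rightarrow> ('w \<Rightarrow> 'a \<Rightarrow> nat) \<Rightarrow> 'a set \<Rightarrow> 'a set \<Rightarrow> real" where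
  "void_prob2 M \<Phi> B1 B2 =
     measure M {\<omega>\<in>space M. pp_count \<Phi> \<omega> B1 = 0 \<and> pp_count \<Phi> \<omega> B2 = 0}"

end

theory Submission
  imports Defs
begin

text \<open>Partition a bounded Borel set \<open>B\<close> into finitely many small Borel pieces \<open>P\<^sub>i\<close>. Iterating the
association inequality for void probabilities compares \<open>P(\<Phi>(B) = 0)\<close> with
\<open>\<Prod>\<^sub>i P(\<Phi>(P\<^sub>i) = 0)\<close>, and the pointwise bounds \<open>1 - n \<le> [n = 0] \<le> 1 - n + n(n - 1)\<close> give
\<open>1 - \<alpha>(P\<^sub>i) \<le> P(\<Phi>(P\<^sub>i) = 0) \<le> 1 - \<alpha>(P\<^sub>i) + E \<Phi>(P\<^sub>i)(\<Phi>(P\<^sub>i) - 1)\<close>.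

For (ii), a diffuse mean measure allows pieces with \<open>\<alpha>(P\<^sub>i) \<le> \<epsilon>\<close>; since
\<open>1 - t \<ge> exp (-(1 + 2\<epsilon>) t)\<close> for \<open>0 \<le> t \<le> \<epsilon> \<le> 1/2\<close>, we get
\<open>P(\<Phi>(B) = 0) \<ge> exp (-(1 + 2\<epsilon>) \<alpha>(B))\<close>, and let \<open>\<epsilon> \<rightarrow> 0\<close>.

For (i), \<open>1 + x \<le> exp x\<close> gives \<open>P(\<Phi>(B) = 0) \<le> exp (-\<alpha>(B) + \<Sum>\<^sub>i E \<Phi>(P\<^sub>i)(\<Phi>(P\<^sub>i) - 1))\<close>.
As the mesh tends to \<open>0\<close>, a simple configuration eventually has at most one point in each piece,
so the error term tends to \<open>0\<close> by dominated convergence; it is dominated by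
\<open>\<Phi>(B)(\<Phi>(B) - 1)\<close>, whose expectation is \<open>\<alpha>\<^sup>(\<^sup>2\<^sup>)(B \<times> B) < \<infinity>\<close>.\<close>

definition pp_supp :: "('w \<Rightarrow> 'a \<Rightarrow> nat) \<Rightarrow> 'w \<Rightarrow> 'a set \<Rightarrow> 'a set" where
  "pp_supp \<Phi> \<omega> B = {x\<in>B. \<Phi> \<omega> x \<noteq> 0}"

lemma pp_count_eq_sum_supp: "pp_count \<Phi> \<omega> B = (\<Sum>x\<in>pp_supp \<Phi> \<omega> B. \<Phi> \<omega> x)"
  by (simp add: pp_count_def pp_supp_def)

lemma pp_count_eq_0_iff:
  assumes "finite (pp_supp \<Phi> \<omega> B)"
  shows "pp_count \<Phi> \<omega> B = 0 \<longleftrightarrow> (\<forall>x\<in>B. \<Phi> \<omega> x = 0)"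
  using assms by (auto simp: pp_count_eq_sum_supp pp_supp_def)

lemma pp_count_singleton: "pp_count \<Phi> \<omega> {x} = \<Phi> \<omega> x"
  by (cases "\<Phi> \<omega> x = 0") (auto simp: pp_count_def Collect_conv_if)

lemma pp_count_mono:
  assumes "finite (pp_supp \<Phi> \<omega> B)" "A \<subseteq> B"
  shows "pp_count \<Phi> \<omega> A \<le> pp_count \<Phi> \<omega> B"
proof -
  have "pp_supp \<Phi> \<omega> A \<subseteq> pp_supp \<Phi> \<omega> B" using assms(2) by (auto simp: pp_supp_def)
  thus ?thesis using assms(1) by (simp add: pp_count_eq_sum_supp sum_mono2)
qed

lemma pp_count_UN:
  assumes "finite I" "disjoint_family_on P I" "\<And>i. i \<in> I \<Longrightarrow> finite (pp_supp \<Phi> \<omega> (P i))"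
  shows "pp_count \<Phi> \<omega> (\<Union>i\<in>I. P i) = (\<Sum>i\<in>I. pp_count \<Phi> \<omega> (P i))"
proof -
  have "pp_supp \<Phi> \<omega> (\<Union>i\<in>I. P i) = (\<Union>i\<in>I. pp_supp \<Phi> \<omega> (P i))"
    by (auto simp: pp_supp_def)
  moreover have "disjoint_family_on (\<lambda>i. pp_supp \<Phi> \<omega> (P i)) I"
    using assms(2) by (auto simp: disjoint_family_on_def pp_supp_def)
  ultimately show ?thesis
    using assms(1,3) by (simp add: pp_count_eq_sum_supp sum.UNION_disjoint_family)
qed

lemma pp_count_le_1:
  assumes "\<forall>x. \<Phi> \<omega> x \<le> 1" "\<And>u v. u \<in> pp_supp \<Phi> \<omega> P \<Longrightarrow> v \<in> pp_supp \<Phi> \<omega> P \<Longrightarrow> u = v"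
  shows "pp_count \<Phi> \<omega> P \<le> 1"
proof (cases "pp_supp \<Phi> \<omega> P = {}")
  case False
  then obtain u where "pp_supp \<Phi> \<omega> P = {u}" using assms(2) by blast
  thus ?thesis using assms(1) by (simp add: pp_count_eq_sum_supp)
qed (simp add: pp_count_eq_sum_supp)

lemma pp_count_le_1_if_separated:
  fixes B :: "'a::metric_space set"
  assumes "\<forall>x. \<Phi> \<omega> x \<le> 1" "P \<subseteq> B" "P \<subseteq> ball c (\<delta> / 2)"
    and "\<forall>u\<in>pp_supp \<Phi> \<omega> B. \<forall>v\<in>pp_supp \<Phi> \<omega> B. u \<noteq> v \<longrightarrow> \<delta> < dist u v"
  shows "pp_count \<Phi> \<omega> P \<le> 1"
proof (rule pp_count_le_1[of \<Phi> \<omega>, OF assms(1)], rule ccontr)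
  fix u v assume uv: "u \<in> pp_supp \<Phi> \<omega> P" "v \<in> pp_supp \<Phi> \<omega> P" "u \<noteq> v"
  then have "\<delta> < dist u v" using assms(2,4) by (auto simp: pp_supp_def)
  moreover have "dist u v < \<delta>"
    using uv assms(3) by (intro dist_triangle_half_l[of u c _ v]) (auto simp: pp_supp_def dist_commute)
  ultimately show False by simp
qed

lemma pp_count2_Times_self:
  assumes "finite (pp_supp \<Phi> \<omega> B)"
  shows "real (pp_count2 \<Phi> \<omega> (B \<times> B)) = real (pp_count \<Phi> \<omega> B) * (real (pp_count \<Phi> \<omega> B) - 1)"
proof -
  let ?S = "pp_supp \<Phi> \<omega> B"
  let ?f = "\<lambda>x. real (\<Phi> \<omega> x)"
  have S: "{p\<in>B \<times> B. \<Phi> \<omega> (fst p) \<noteq> 0 \<and> \<Phi> \<omega> (snd p) \<noteq> 0} = ?S \<times> ?S"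
    by (auto simp: pp_supp_def)
  have "real (pp_count2 \<Phi> \<omega> (B \<times> B)) =
      (\<Sum>(x, y)\<in>?S \<times> ?S. ?f x * ?f y - (if x = y then ?f x else 0))"
    unfolding pp_count2_def S of_nat_sum
    by (intro sum.cong refl) (auto simp: pp_supp_def of_nat_diff algebra_simps split: prod.splits)
  also have "\<dots> = (\<Sum>x\<in>?S. ?f x) * (\<Sum>x\<in>?S. ?f x) - (\<Sum>x\<in>?S. ?f x)"
    using assms by (simp add: sum.cartesian_product[symmetric] sum_subtractf sum_product)
  finally show ?thesis by (simp add: pp_count_eq_sum_supp algebra_simps)
qed

lemma sum_factorial2_le:
  fixes n :: "'i \<Rightarrow> nat"
  assumes "finite I"
  shows "(\<Sum>i\<in>I. real (n i) * (real (n i) - 1)) \<le> real (\<Sum>i\<in>I. n i) * (real (\<Sum>i\<in>I. n i) - 1)"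
proof -
  have "(\<Sum>i\<in>I. real (n i) * real (n i)) \<le> (\<Sum>i\<in>I. \<Sum>j\<in>I. real (n i) * real (n j))"
    using assms by (intro sum_mono member_le_sum[where f = "\<lambda>j. _ * real (n j)"]) auto
  then show ?thesis by (simp add: sum_product sum_subtractf algebra_simps)
qed

lemma exp_neg_scaled_le_one_minus:
  fixes t e :: real
  assumes "0 \<le> t" "t \<le> e" "e \<le> 1/2"
  shows "exp (- (1 + 2 * e) * t) \<le> 1 - t"
proof -
  have "- (1 + 2 * e) * t \<le> - t - 2 * t\<^sup>2"
    using mult_right_mono[OF assms(2,1)] by (simp add: algebra_simps power2_eq_square)
  also have "\<dots> \<le> ln (1 - t)" using assms by (intro ln_one_minus_pos_lower_bound) auto
  finally show ?thesis using assms by (subst (asm) ln_ge_iff) auto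
qed

lemma of_bool_eq_0_bounds:
  fixes n :: nat
  shows "1 - real n \<le> of_bool (n = 0)" and "of_bool (n = 0) \<le> 1 - real n + real n * (real n - 1)"
proof -
  have "0 \<le> (real n - 1) * (real n - 1)" by simp
  then show "of_bool (n = 0) \<le> 1 - real n + real n * (real n - 1)"
    by (cases "n = 0") (auto simp: algebra_simps)
qed simp

lemma eventually_separated:
  fixes S :: "'a::metric_space set"
  assumes "finite S" "\<rho> \<longlonglongrightarrow> 0"
  shows "eventually (\<lambda>n. \<forall>u\<in>S. \<forall>v\<in>S. u \<noteq> v \<longrightarrow> \<rho> n < dist u v) sequentially"
  using assms by (intro eventually_ball_finite ballI impI) (auto intro: order_tendstoD(2))

lemma eventually_pieces_pp_count_le_1:
  fixes B :: "'a::metric_space set"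
  assumes "finite (pp_supp \<Phi> \<omega> B)" "\<forall>x. \<Phi> \<omega> x \<le> 1" "\<rho> \<longlonglongrightarrow> 0"
    and "\<And>n i. i < K n \<Longrightarrow> P n i \<subseteq> B \<inter> ball (c n i) (\<rho> n / 2)"
  shows "eventually (\<lambda>n. \<forall>i<K n. pp_count \<Phi> \<omega> (P n i) \<le> 1) sequentially"
  using eventually_separated[OF assms(1,3)]
proof eventually_elim
  case (elim n)
  show ?case
  proof (intro allI impI)
    fix i assume "i < K n"
    with assms(4) have "P n i \<subseteq> B" "P n i \<subseteq> ball (c n i) (\<rho> n / 2)" by auto
    from assms(2) this elim show "pp_count \<Phi> \<omega> (P n i) \<le> 1" by (rule pp_count_le_1_if_separated)
  qed
qed

lemma disjoint_family_on_lessThan_Suc: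
  "disjoint_family_on P {..<Suc k} \<longleftrightarrow> disjoint_family_on P {..<k} \<and> (\<Union>i<k. P i) \<inter> P k = {}"
  by (auto simp: disjoint_family_on_def lessThan_Suc; blast)

lemma bdd_borel_UN:
  "finite I \<Longrightarrow> (\<And>i. i \<in> I \<Longrightarrow> bdd_borel (P i)) \<Longrightarrow> bdd_borel (\<Union>i\<in>I. P i)"
  by (auto simp: bdd_borel_def)

lemma bdd_borel_partition_small:
  fixes B :: "'a::euclidean_space set"
  assumes "bdd_borel B" "\<And>x. 0 < r x"
  obtains k :: nat and P c where "\<And>i. i < k \<Longrightarrow> bdd_borel (P i)" "disjoint_family_on P {..<k}"
    "(\<Union>i<k. P i) = B" "\<And>i. i < k \<Longrightarrow> P i \<subseteq> ball (c i) (r (c i))"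
proof -
  have "closure B \<subseteq> (\<Union>x\<in>closure B. ball x (r x))" using assms(2) by force
  then obtain C where C: "finite C" "closure B \<subseteq> (\<Union>x\<in>C. ball x (r x))"
    using compactE_image[of "closure B"] assms(1) by (metis bdd_borel_def compact_closure open_ball)
  obtain cs where "set cs = C" using finite_list[OF C(1)] by blast
  define U where "U i = ball (cs ! i) (r (cs ! i))" for i
  define P where "P i = B \<inter> disjointed U i" for i
  have "B \<subseteq> (\<Union>i<length cs. U i)"
    using C(2) closure_subset \<open>set cs = C\<close> by (fastforce simp: U_def in_set_conv_nth)
  hence "(\<Union>i<length cs. P i) = B"
    using finite_UN_disjointed_eq[of U "length cs"] by (auto simp: P_def atLeast0LessThan)
  moreover have "disjoint_family_on P {..<length cs}"
    using disjoint_family_disjointed[of U] by (auto simp: P_def disjoint_family_on_def)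
  moreover have "bdd_borel (P i)" for i
  proof -
    have "range (disjointed U) \<subseteq> sets borel"
      by (rule sets.range_disjointed_sets) (auto simp: U_def)
    thus ?thesis using assms(1) by (auto simp: P_def bdd_borel_def intro: bounded_subset)
  qed
  moreover have "P i \<subseteq> ball (cs ! i) (r (cs ! i))" for i
    using disjointed_subset[of U i] by (auto simp: P_def U_def)
  ultimately show ?thesis using that[where k="length cs" and P=P and c="\<lambda>i. cs ! i"] by simp
qed

locale radon_point_process =
  fixes M :: "'w measure" and \<Phi> :: "'w \<Rightarrow> 'a::euclidean_space \<Rightarrow> nat"
  assumes point_process: "point_process M \<Phi>" and radon_mean: "radon_mean M \<Phi>"
begin

sublocale prob_space M
  using point_process by (simp add: point_process_def)

abbreviation N :: "'a set \<Rightarrow> 'w \<Rightarrow> real" where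
  "N B \<omega> \<equiv> real (pp_count \<Phi> \<omega> B)"

text \<open>By \<open>radon_mean\<close> the mean measure of a bounded Borel set is finite, so passing to \<open>real\<close>
via \<open>enn2real\<close> loses nothing there.\<close>

abbreviation \<alpha> :: "'a set \<Rightarrow> real" where
  "\<alpha> B \<equiv> enn2real (mean_measure M \<Phi> B)"

lemma finite_pp_supp: "\<omega> \<in> space M \<Longrightarrow> bounded B \<Longrightarrow> finite (pp_supp \<Phi> \<omega> B)"
  using point_process by (simp add: point_process_def pp_supp_def)

lemma measurable_pp_count:
  "bdd_borel B \<Longrightarrow> (\<lambda>\<omega>. pp_count \<Phi> \<omega> B) \<in> measurable M (count_space UNIV)"
  using point_process by (simp add: point_process_def)

lemma borel_measurable_pp_count:
  "bdd_borel B \<Longrightarrow> (\<lambda>\<omega>. g (pp_count \<Phi> \<omega> B) :: real) \<in> borel_measurable M"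
  by (rule measurable_compose[OF measurable_pp_count]) auto

lemma integrable_N:
  assumes "bdd_borel B"
  shows "integrable M (N B)"
proof (rule integrableI_bounded)
  have "(\<integral>\<^sup>+\<omega>. ennreal (norm (N B \<omega>)) \<partial>M) = mean_measure M \<Phi> B"
    by (simp add: mean_measure_def ennreal_of_nat_eq_real_of_nat)
  also have "\<dots> < \<infinity>" using radon_mean assms by (simp add: radon_mean_def)
  finally show "(\<integral>\<^sup>+\<omega>. ennreal (norm (N B \<omega>)) \<partial>M) < \<infinity>" .
qed (rule borel_measurable_pp_count[OF assms])

lemma integral_N: "bdd_borel B \<Longrightarrow> (\<integral>\<omega>. N B \<omega> \<partial>M) = \<alpha> B"
  by (subst integral_eq_nn_integral)
     (auto intro: borel_measurable_pp_count simp: mean_measure_def ennreal_of_nat_eq_real_of_nat)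

lemma integrable_N_factorial2:
  assumes "radon_fact2 M \<Phi>" "bdd_borel B"
  shows "integrable M (\<lambda>\<omega>. N B \<omega> * (N B \<omega> - 1))"
proof (rule integrableI_bounded)
  have "(\<integral>\<^sup>+\<omega>. ennreal (norm (N B \<omega> * (N B \<omega> - 1))) \<partial>M) = fact_moment2 M \<Phi> (B \<times> B)"
    unfolding fact_moment2_def
  proof (rule nn_integral_cong)
    fix \<omega> assume "\<omega> \<in> space M"
    then have "real (pp_count2 \<Phi> \<omega> (B \<times> B)) = N B \<omega> * (N B \<omega> - 1)"
      using assms(2) by (intro pp_count2_Times_self finite_pp_supp) (auto simp: bdd_borel_def)
    then show "ennreal (norm (N B \<omega> * (N B \<omega> - 1))) = of_nat (pp_count2 \<Phi> \<omega> (B \<times> B))"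
      by (metis ennreal_of_nat_eq_real_of_nat of_nat_0_le_iff real_norm_def abs_of_nonneg)
  qed
  also have "\<dots> < \<infinity>"
    using assms by (auto simp: radon_fact2_def bdd_borel_def borel_Times bounded_Times)
  finally show "(\<integral>\<^sup>+\<omega>. ennreal (norm (N B \<omega> * (N B \<omega> - 1))) \<partial>M) < \<infinity>" .
qed (use borel_measurable_pp_count[OF assms(2), where g = "\<lambda>n. real n * (real n - 1)"] in simp)

lemma void_prob_eq_integral:
  "void_prob M \<Phi> B = (\<integral>\<omega>. of_bool (pp_count \<Phi> \<omega> B = 0) \<partial>M)"
proof -
  have "void_prob M \<Phi> B = (\<integral>\<omega>. indicator {\<omega>\<in>space M. pp_count \<Phi> \<omega> B = 0} \<omega> \<partial>M)"
    by (simp add: void_prob_def Int_absorb2)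
  also have "\<dots> = (\<integral>\<omega>. of_bool (pp_count \<Phi> \<omega> B = 0) \<partial>M)"
    by (intro Bochner_Integration.integral_cong) (auto simp: indicator_def)
  finally show ?thesis .
qed

lemma integrable_void_indicator:
  "bdd_borel B \<Longrightarrow> integrable M (\<lambda>\<omega>. of_bool (pp_count \<Phi> \<omega> B = 0) :: real)"
  by (intro integrable_const_bound[where B = 1] borel_measurable_pp_count) auto

lemma void_prob_ge_one_minus_mean:
  assumes "bdd_borel B"
  shows "1 - \<alpha> B \<le> void_prob M \<Phi> B"
proof -
  have "1 - \<alpha> B = (\<integral>\<omega>. 1 - N B \<omega> \<partial>M)"
    using assms by (simp add: integrable_N integral_N prob_space)
  also have "\<dots> \<le> (\<integral>\<omega>. of_bool (pp_count \<Phi> \<omega> B = 0) \<partial>M)"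
    using assms by (intro integral_mono integrable_void_indicator Bochner_Integration.integrable_diff
        integrable_N of_bool_eq_0_bounds) auto
  finally show ?thesis by (simp add: void_prob_eq_integral)
qed

lemma void_prob_le_one_minus_mean_plus_factorial2:
  assumes "radon_fact2 M \<Phi>" "bdd_borel B"
  shows "void_prob M \<Phi> B \<le> 1 - \<alpha> B + (\<integral>\<omega>. N B \<omega> * (N B \<omega> - 1) \<partial>M)"
proof -
  have "void_prob M \<Phi> B \<le> (\<integral>\<omega>. 1 - N B \<omega> + N B \<omega> * (N B \<omega> - 1) \<partial>M)"
    unfolding void_prob_eq_integral
    using assms by (intro integral_mono integrable_void_indicator Bochner_Integration.integrable_add
        Bochner_Integration.integrable_diff integrable_N integrable_N_factorial2 of_bool_eq_0_bounds) auto
  also have "\<dots> = 1 - \<alpha> B + (\<integral>\<omega>. N B \<omega> * (N B \<omega> - 1) \<partial>M)"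
    using assms by (simp add: integrable_N integral_N integrable_N_factorial2 prob_space)
  finally show ?thesis .
qed

lemma N_UN:
  assumes "\<omega> \<in> space M" "\<And>i. i < (k::nat) \<Longrightarrow> bdd_borel (P i)" "disjoint_family_on P {..<k}"
  shows "N (\<Union>i<k. P i) \<omega> = (\<Sum>i<k. N (P i) \<omega>)"
  using assms by (subst pp_count_UN) (auto intro: finite_pp_supp simp: bdd_borel_def)

lemma mean_measure_UN:
  assumes "\<And>i. i < (k::nat) \<Longrightarrow> bdd_borel (P i)" "disjoint_family_on P {..<k}"
  shows "\<alpha> (\<Union>i<k. P i) = (\<Sum>i<k. \<alpha> (P i))"
proof -
  have "\<alpha> (\<Union>i<k. P i) = (\<integral>\<omega>. N (\<Union>i<k. P i) \<omega> \<partial>M)"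
    using assms by (intro integral_N[symmetric] bdd_borel_UN) auto
  also have "\<dots> = (\<integral>\<omega>. (\<Sum>i<k. N (P i) \<omega>) \<partial>M)"
    using assms by (intro Bochner_Integration.integral_cong) (simp_all add: N_UN)
  also have "\<dots> = (\<Sum>i<k. \<alpha> (P i))"
    using assms by (simp add: integrable_N integral_N)
  finally show ?thesis .
qed

lemma void_prob2_eq_void_prob_Un:
  "bounded B1 \<Longrightarrow> bounded B2 \<Longrightarrow> void_prob2 M \<Phi> B1 B2 = void_prob M \<Phi> (B1 \<union> B2)"
  unfolding void_prob_def void_prob2_def
  by (rule arg_cong[where f = "measure M"])
     (auto simp: pp_count_eq_0_iff finite_pp_supp)

lemma void_prob_UN_le_prod:
  assumes neg: "\<And>B1 B2. bdd_borel B1 \<Longrightarrow> bdd_borel B2 \<Longrightarrow> B1 \<inter> B2 = {} \<Longrightarrow>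
      void_prob2 M \<Phi> B1 B2 \<le> void_prob M \<Phi> B1 * void_prob M \<Phi> B2"
    and "\<And>i. i < (k::nat) \<Longrightarrow> bdd_borel (P i)" "disjoint_family_on P {..<k}"
  shows "void_prob M \<Phi> (\<Union>i<k. P i) \<le> (\<Prod>i<k. void_prob M \<Phi> (P i))"
  using assms(2,3)
proof (induction k)
  case 0
  then show ?case by (simp add: void_prob_def pp_count_def prob_space)
next
  case (Suc k)
  let ?U = "\<Union>i<k. P i"
  have U: "bdd_borel ?U" "?U \<inter> P k = {}" and Pk: "bdd_borel (P k)"
    using Suc.prems by (auto simp: disjoint_family_on_lessThan_Suc intro: bdd_borel_UN)
  have "void_prob M \<Phi> (\<Union>i<Suc k. P i) = void_prob2 M \<Phi> ?U (P k)"
    using U Pk by (simp add: lessThan_Suc void_prob2_eq_void_prob_Un bdd_borel_def Un_commute)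
  also have "\<dots> \<le> void_prob M \<Phi> ?U * void_prob M \<Phi> (P k)"
    using neg U Pk by blast
  also have "\<dots> \<le> (\<Prod>i<k. void_prob M \<Phi> (P i)) * void_prob M \<Phi> (P k)"
    using Suc by (intro mult_right_mono) (auto simp: disjoint_family_on_lessThan_Suc void_prob_def)
  finally show ?case by simp
qed

lemma void_prob_UN_ge_prod:
  assumes pos: "\<And>B1 B2. bdd_borel B1 \<Longrightarrow> bdd_borel B2 \<Longrightarrow> B1 \<inter> B2 = {} \<Longrightarrow>
      void_prob2 M \<Phi> B1 B2 \<ge> void_prob M \<Phi> B1 * void_prob M \<Phi> B2"
    and "\<And>i. i < (k::nat) \<Longrightarrow> bdd_borel (P i)" "disjoint_family_on P {..<k}"
  shows "void_prob M \<Phi> (\<Union>i<k. P i) \<ge> (\<Prod>i<k. void_prob M \<Phi> (P i))"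
  using assms(2,3)
proof (induction k)
  case 0
  then show ?case by (simp add: void_prob_def pp_count_def prob_space)
next
  case (Suc k)
  let ?U = "\<Union>i<k. P i"
  have U: "bdd_borel ?U" "?U \<inter> P k = {}" and Pk: "bdd_borel (P k)"
    using Suc.prems by (auto simp: disjoint_family_on_lessThan_Suc intro: bdd_borel_UN)
  have "(\<Prod>i<Suc k. void_prob M \<Phi> (P i)) \<le> void_prob M \<Phi> ?U * void_prob M \<Phi> (P k)"
    using Suc by (auto simp: disjoint_family_on_lessThan_Suc void_prob_def intro: mult_right_mono)
  also have "\<dots> \<le> void_prob2 M \<Phi> ?U (P k)"
    using pos U Pk by blast
  also have "\<dots> = void_prob M \<Phi> (\<Union>i<Suc k. P i)"
    using U Pk by (simp add: lessThan_Suc void_prob2_eq_void_prob_Un bdd_borel_def Un_commute)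
  finally show ?case .
qed

lemma mean_measure_mono:
  assumes "bdd_borel A" "bdd_borel B" "A \<subseteq> B"
  shows "\<alpha> A \<le> \<alpha> B"
proof -
  have "(\<integral>\<omega>. N A \<omega> \<partial>M) \<le> (\<integral>\<omega>. N B \<omega> \<partial>M)"
    using assms by (intro integral_mono integrable_N of_nat_mono pp_count_mono finite_pp_supp)
      (auto simp: bdd_borel_def)
  with assms show ?thesis by (simp add: integral_N)
qed

lemma AE_diffuse_no_atom:
  assumes "diffuse_mean M \<Phi>"
  shows "AE \<omega> in M. \<Phi> \<omega> x = 0"
proof -
  have "bdd_borel {x}" by (simp add: bdd_borel_def)
  moreover have "(\<integral>\<^sup>+\<omega>. of_nat (pp_count \<Phi> \<omega> {x}) \<partial>M) = 0"
    using assms by (simp add: diffuse_mean_def mean_measure_def)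
  ultimately have "AE \<omega> in M. of_nat (pp_count \<Phi> \<omega> {x}) = (0::ennreal)"
    by (subst (asm) nn_integral_0_iff_AE) (auto intro: measurable_compose[OF measurable_pp_count])
  then show ?thesis by (simp add: pp_count_singleton)
qed

lemma mean_measure_small_near:
  assumes "diffuse_mean M \<Phi>" "bdd_borel B" "0 < \<epsilon>"
  shows "\<exists>r>0. \<alpha> (B \<inter> ball x r) < \<epsilon>"
proof -
  define \<rho> where "\<rho> n = inverse (real (Suc n))" for n
  have \<rho>: "\<rho> \<longlonglongrightarrow> 0" "\<And>n. 0 < \<rho> n"
    unfolding \<rho>_def by (rule LIMSEQ_inverse_real_of_nat) simp
  have bdd: "bdd_borel (B \<inter> ball x (\<rho> n))" for n
    using assms(2) by (auto simp: bdd_borel_def)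
  have conv: "AE \<omega> in M. (\<lambda>n. N (B \<inter> ball x (\<rho> n)) \<omega>) \<longlonglongrightarrow> 0"
    using AE_diffuse_no_atom[OF assms(1), of x] AE_space
  proof eventually_elim
    case (elim \<omega>)
    have fin: "finite (pp_supp \<Phi> \<omega> B)" "finite (pp_supp \<Phi> \<omega> (B \<inter> ball x (\<rho> n)))" for n
      using elim assms(2) by (auto intro!: finite_pp_supp simp: bdd_borel_def)
    have "eventually (\<lambda>n. pp_count \<Phi> \<omega> (B \<inter> ball x (\<rho> n)) = 0) sequentially"
      using eventually_separated[OF finite_insert[THEN iffD2, OF fin(1)] \<rho>(1), of x]
    proof eventually_elim
      case (elim n)
      then have "\<Phi> \<omega> z = 0" if "z \<in> B" "dist x z < \<rho> n" for z
        using that \<open>\<Phi> \<omega> x = 0\<close> by (force simp: pp_supp_def)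
      then show ?case by (auto simp: pp_count_eq_0_iff[OF fin(2)])
    qed
    then show ?case by (simp add: tendsto_eventually)
  qed
  have "(\<lambda>n. \<integral>\<omega>. N (B \<inter> ball x (\<rho> n)) \<omega> \<partial>M) \<longlonglongrightarrow> (\<integral>\<omega>. 0 \<partial>M)"
  proof (rule integral_dominated_convergence[where w = "N B"])
    show "AE \<omega> in M. norm (N (B \<inter> ball x (\<rho> n)) \<omega>) \<le> N B \<omega>" for n
      using assms(2) by (intro AE_I2) (auto intro!: pp_count_mono finite_pp_supp simp: bdd_borel_def)
  qed (use assms(2) bdd conv in \<open>simp_all add: integrable_N borel_measurable_pp_count\<close>)
  then have "eventually (\<lambda>n. \<alpha> (B \<inter> ball x (\<rho> n)) < \<epsilon>) sequentially"
    using assms(3) by (simp add: integral_N[OF bdd] order_tendstoD(2))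
  then obtain n where "\<alpha> (B \<inter> ball x (\<rho> n)) < \<epsilon>"
    by (auto simp: eventually_sequentially)
  then show ?thesis using \<rho>(2) by blast
qed

lemma exp_neg_scaled_mean_le_void_prob:
  assumes pos: "\<And>B1 B2. bdd_borel B1 \<Longrightarrow> bdd_borel B2 \<Longrightarrow> B1 \<inter> B2 = {} \<Longrightarrow>
      void_prob2 M \<Phi> B1 B2 \<ge> void_prob M \<Phi> B1 * void_prob M \<Phi> B2"
    and part: "\<And>i. i < (k::nat) \<Longrightarrow> bdd_borel (P i)" "disjoint_family_on P {..<k}"
    and small: "\<And>i. i < k \<Longrightarrow> \<alpha> (P i) \<le> e" and "e \<le> 1/2"
  shows "exp (- (1 + 2 * e) * \<alpha> (\<Union>i<k. P i)) \<le> void_prob M \<Phi> (\<Union>i<k. P i)"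
proof -
  have "exp (- (1 + 2 * e) * \<alpha> (\<Union>i<k. P i)) = (\<Prod>i<k. exp (- (1 + 2 * e) * \<alpha> (P i)))"
    using part by (simp add: mean_measure_UN sum_distrib_left exp_sum)
  also have "\<dots> \<le> (\<Prod>i<k. 1 - \<alpha> (P i))"
    using small \<open>e \<le> 1/2\<close> by (intro prod_mono exp_neg_scaled_le_one_minus conjI) auto
  also have "\<dots> \<le> (\<Prod>i<k. void_prob M \<Phi> (P i))"
    using small \<open>e \<le> 1/2\<close> part by (intro prod_mono void_prob_ge_one_minus_mean conjI) (auto dest!: small)
  also have "\<dots> \<le> void_prob M \<Phi> (\<Union>i<k. P i)"
    by (rule void_prob_UN_ge_prod[OF pos part])
  finally show ?thesis .
qed

lemma void_prob_ge_exp_neg_mean: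
  assumes diffuse: "diffuse_mean M \<Phi>"
    and pos: "\<And>B1 B2. bdd_borel B1 \<Longrightarrow> bdd_borel B2 \<Longrightarrow> B1 \<inter> B2 = {} \<Longrightarrow>
      void_prob2 M \<Phi> B1 B2 \<ge> void_prob M \<Phi> B1 * void_prob M \<Phi> B2"
    and B: "bdd_borel B"
  shows "exp (- \<alpha> B) \<le> void_prob M \<Phi> B"
proof -
  have approx: "exp (- (1 + 2 * e) * \<alpha> B) \<le> void_prob M \<Phi> B" if e: "0 < e" "e \<le> 1/2" for e
  proof -
    have "\<forall>x. \<exists>r>0. \<alpha> (B \<inter> ball x r) < e"
      using mean_measure_small_near[OF diffuse B e(1)] by blast
    then obtain r where r: "\<And>x. 0 < r x" "\<And>x. \<alpha> (B \<inter> ball x (r x)) < e"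
      using choice[of "\<lambda>x r. 0 < r \<and> \<alpha> (B \<inter> ball x r) < e"] by blast
    obtain k :: nat and P c where P: "\<And>i. i < k \<Longrightarrow> bdd_borel (P i)" "disjoint_family_on P {..<k}"
      "(\<Union>i<k. P i) = B" "\<And>i. i < k \<Longrightarrow> P i \<subseteq> ball (c i) (r (c i))"
      by (rule bdd_borel_partition_small[where r = r, OF B r(1)]) (rule that)
    have small: "\<alpha> (P i) \<le> e" if "i < k" for i
    proof -
      have "\<alpha> (P i) \<le> \<alpha> (B \<inter> ball (c i) (r (c i)))"
        using P that B by (intro mean_measure_mono) (auto simp: bdd_borel_def)
      with r(2)[of "c i"] show ?thesis by simp
    qed
    have "exp (- (1 + 2 * e) * \<alpha> (\<Union>i<k. P i)) \<le> void_prob M \<Phi> (\<Union>i<k. P i)"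
      by (rule exp_neg_scaled_mean_le_void_prob[OF pos P(1,2) small e(2)])
    then show ?thesis by (simp only: P(3))
  qed
  have "((\<lambda>e. exp (- (1 + 2 * e) * \<alpha> B)) \<longlongrightarrow> exp (- (1 + 2 * 0) * \<alpha> B)) (at_right 0)"
    by (intro tendsto_intros)
  moreover have "eventually (\<lambda>e. exp (- (1 + 2 * e) * \<alpha> B) \<le> void_prob M \<Phi> B) (at_right 0)"
    unfolding eventually_at_right_field using approx by (intro exI[of _ "1/2"]) auto
  ultimately show ?thesis by (simp add: tendsto_upperbound)
qed

lemma void_prob_le_exp_neg_mean_plus_error:
  assumes neg: "\<And>B1 B2. bdd_borel B1 \<Longrightarrow> bdd_borel B2 \<Longrightarrow> B1 \<inter> B2 = {} \<Longrightarrow>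
      void_prob2 M \<Phi> B1 B2 \<le> void_prob M \<Phi> B1 * void_prob M \<Phi> B2"
    and fact2: "radon_fact2 M \<Phi>"
    and part: "\<And>i. i < (k::nat) \<Longrightarrow> bdd_borel (P i)" "disjoint_family_on P {..<k}"
  shows "void_prob M \<Phi> (\<Union>i<k. P i)
    \<le> exp (- \<alpha> (\<Union>i<k. P i) + (\<integral>\<omega>. (\<Sum>i<k. N (P i) \<omega> * (N (P i) \<omega> - 1)) \<partial>M))"
proof -
  have "void_prob M \<Phi> (\<Union>i<k. P i) \<le> (\<Prod>i<k. void_prob M \<Phi> (P i))"
    by (rule void_prob_UN_le_prod[OF neg part])
  also have "\<dots> \<le> (\<Prod>i<k. exp (- \<alpha> (P i) + (\<integral>\<omega>. N (P i) \<omega> * (N (P i) \<omega> - 1) \<partial>M)))"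
  proof (intro prod_mono conjI)
    fix i assume "i \<in> {..<k}"
    then have "void_prob M \<Phi> (P i) \<le> 1 + (- \<alpha> (P i) + (\<integral>\<omega>. N (P i) \<omega> * (N (P i) \<omega> - 1) \<partial>M))"
      using void_prob_le_one_minus_mean_plus_factorial2[OF fact2 part(1)[of i]] by simp
    also have "\<dots> \<le> exp (- \<alpha> (P i) + (\<integral>\<omega>. N (P i) \<omega> * (N (P i) \<omega> - 1) \<partial>M))"
      by (rule exp_ge_add_one_self)
    finally show "void_prob M \<Phi> (P i) \<le> exp (- \<alpha> (P i) + (\<integral>\<omega>. N (P i) \<omega> * (N (P i) \<omega> - 1) \<partial>M))" .
  qed (simp add: void_prob_def)
  also have "\<dots> = exp (- \<alpha> (\<Union>i<k. P i) + (\<integral>\<omega>. (\<Sum>i<k. N (P i) \<omega> * (N (P i) \<omega> - 1)) \<partial>M))"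
    using part fact2 by (simp add: exp_sum[symmetric] sum_subtractf mean_measure_UN integrable_N_factorial2)
  finally show ?thesis .
qed

lemma factorial2_pieces_le:
  assumes "\<omega> \<in> space M" "\<And>i. i < (k::nat) \<Longrightarrow> bdd_borel (P i)" "disjoint_family_on P {..<k}"
  shows "(\<Sum>i<k. N (P i) \<omega> * (N (P i) \<omega> - 1))
    \<le> N (\<Union>i<k. P i) \<omega> * (N (\<Union>i<k. P i) \<omega> - 1)"
proof -
  have "pp_count \<Phi> \<omega> (\<Union>i<k. P i) = (\<Sum>i<k. pp_count \<Phi> \<omega> (P i))"
    using assms by (intro pp_count_UN finite_pp_supp) (auto simp: bdd_borel_def)
  then show ?thesis using sum_factorial2_le[of "{..<k}" "\<lambda>i. pp_count \<Phi> \<omega> (P i)"] by simp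
qed

lemma void_prob_le_exp_neg_mean:
  assumes simple: "simple_pp M \<Phi>" and fact2: "radon_fact2 M \<Phi>"
    and neg: "\<And>B1 B2. bdd_borel B1 \<Longrightarrow> bdd_borel B2 \<Longrightarrow> B1 \<inter> B2 = {} \<Longrightarrow>
      void_prob2 M \<Phi> B1 B2 \<le> void_prob M \<Phi> B1 * void_prob M \<Phi> B2"
    and B: "bdd_borel B"
  shows "void_prob M \<Phi> B \<le> exp (- \<alpha> B)"
proof -
  define \<rho> where "\<rho> n = inverse (real (Suc n))" for n
  have \<rho>: "\<rho> \<longlonglongrightarrow> 0" "\<And>n. 0 < \<rho> n"
    unfolding \<rho>_def by (rule LIMSEQ_inverse_real_of_nat) simp
  define mesh_le :: "nat \<Rightarrow> nat \<Rightarrow> (nat \<Rightarrow> 'a set) \<Rightarrow> (nat \<Rightarrow> 'a) \<Rightarrow> bool"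
    where "mesh_le n k P c \<longleftrightarrow> (\<forall>i<k. bdd_borel (P i)) \<and> disjoint_family_on P {..<k}
      \<and> (\<Union>i<k. P i) = B \<and> (\<forall>i<k. P i \<subseteq> ball (c i) (\<rho> n / 2))" for n k P c
  have "\<exists>k P c. mesh_le n k P c" for n
  proof -
    have "\<And>x::'a. 0 < \<rho> n / 2" using \<rho>(2) by simp
    then obtain k :: nat and P c where "\<And>i. i < k \<Longrightarrow> bdd_borel (P i)" "disjoint_family_on P {..<k}"
      "(\<Union>i<k. P i) = B" "\<And>i. i < k \<Longrightarrow> P i \<subseteq> ball (c i) (\<rho> n / 2)"
      by (rule bdd_borel_partition_small[OF B]) (rule that)
    then show ?thesis unfolding mesh_le_def by blast
  qed
  then obtain K P c where "mesh_le n (K n) (P n) (c n)" for n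
    by metis
  then have P: "\<And>n i. i < K n \<Longrightarrow> bdd_borel (P n i)" "\<And>n. disjoint_family_on (P n) {..<K n}"
      "\<And>n. (\<Union>i<K n. P n i) = B" "\<And>n i. i < K n \<Longrightarrow> P n i \<subseteq> B \<inter> ball (c n i) (\<rho> n / 2)"
    unfolding mesh_le_def by blast+
  define err where "err n \<omega> = (\<Sum>i<K n. N (P n i) \<omega> * (N (P n i) \<omega> - 1))" for n \<omega>
  have err_lim: "(\<lambda>n. \<integral>\<omega>. err n \<omega> \<partial>M) \<longlonglongrightarrow> (\<integral>\<omega>. 0 \<partial>M)"
  proof (rule integral_dominated_convergence[where w = "\<lambda>\<omega>. N B \<omega> * (N B \<omega> - 1)"])
    show "AE \<omega> in M. (\<lambda>n. err n \<omega>) \<longlonglongrightarrow> 0"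
      using simple[unfolded simple_pp_def] AE_space
    proof eventually_elim
      case (elim \<omega>)
      have "finite (pp_supp \<Phi> \<omega> B)" using elim B by (auto intro: finite_pp_supp simp: bdd_borel_def)
      then have "eventually (\<lambda>n. \<forall>i<K n. pp_count \<Phi> \<omega> (P n i) \<le> 1) sequentially"
        by (rule eventually_pieces_pp_count_le_1[OF _ _ \<rho>(1) P(4)]) (use elim in simp)
      then have "eventually (\<lambda>n. err n \<omega> = 0) sequentially"
      proof eventually_elim
        case (elim n)
        have "N (P n i) \<omega> * (N (P n i) \<omega> - 1) = 0" if "i < K n" for i
          using elim that by (cases "pp_count \<Phi> \<omega> (P n i)") auto
        then show ?case unfolding err_def by (intro sum.neutral) simp
      qed
      then show ?case by (simp add: tendsto_eventually)
    qed
    show "AE \<omega> in M. norm (err n \<omega>) \<le> N B \<omega> * (N B \<omega> - 1)" for n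
    proof (rule AE_I2)
      fix \<omega> assume "\<omega> \<in> space M"
      have "0 \<le> real m * (real m - 1)" for m :: nat by (cases m) auto
      then have "0 \<le> err n \<omega>" unfolding err_def by (intro sum_nonneg)
      moreover have "err n \<omega> \<le> N B \<omega> * (N B \<omega> - 1)"
        using factorial2_pieces_le[OF \<open>\<omega> \<in> space M\<close> P(1,2)] by (simp only: err_def P(3))
      ultimately show "norm (err n \<omega>) \<le> N B \<omega> * (N B \<omega> - 1)" by simp
    qed
    show "(\<lambda>\<omega>. 0) \<in> borel_measurable M" by simp
    show "integrable M (\<lambda>\<omega>. N B \<omega> * (N B \<omega> - 1))" using fact2 B by (rule integrable_N_factorial2)
    have "(\<lambda>\<omega>. N (P n i) \<omega> * (N (P n i) \<omega> - 1)) \<in> borel_measurable M" if "i < K n" for n i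
      using borel_measurable_pp_count[OF P(1)[OF that], where g = "\<lambda>m. real m * (real m - 1)"] by simp
    then show "err n \<in> borel_measurable M" for n
      unfolding err_def by (intro borel_measurable_sum) simp
  qed
  have bound: "void_prob M \<Phi> B \<le> exp (- \<alpha> B + (\<integral>\<omega>. err n \<omega> \<partial>M))" for n
    using void_prob_le_exp_neg_mean_plus_error[OF neg fact2 P(1,2), of n] by (simp only: P(3) err_def)
  have "(\<lambda>n. exp (- \<alpha> B + (\<integral>\<omega>. err n \<omega> \<partial>M))) \<longlonglongrightarrow> exp (- \<alpha> B + 0)"
    using err_lim by (intro tendsto_intros) simp
  then have "void_prob M \<Phi> B \<le> exp (- \<alpha> B + 0)"
    by (rule LIMSEQ_le_const) (use bound in blast)
  then show ?thesis by simp
qed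

end

theorem proposition3p1:
  fixes M :: "'w measure" and \<Phi> :: "'w \<Rightarrow> 'a::euclidean_space \<Rightarrow> nat"
  assumes "point_process M \<Phi>" and "radon_mean M \<Phi>"
  shows "(simple_pp M \<Phi> \<and> radon_fact2 M \<Phi> \<and>
          (\<forall>B1 B2. bdd_borel B1 \<longrightarrow> bdd_borel B2 \<longrightarrow> B1 \<inter> B2 = {} \<longrightarrow>
              void_prob2 M \<Phi> B1 B2 \<le> void_prob M \<Phi> B1 * void_prob M \<Phi> B2)
          \<longrightarrow> (\<forall>B. bdd_borel B \<longrightarrow>
                 void_prob M \<Phi> B \<le> exp (- enn2real (mean_measure M \<Phi> B))))
       \<and> (diffuse_mean M \<Phi> \<and>
          (\<forall>B1 B2. bdd_borel B1 \<longrightarrow> bdd_borel B2 \<longrightarrow> B1 \<inter> B2 = {} \<longrightarrow>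
              void_prob2 M \<Phi> B1 B2 \<ge> void_prob M \<Phi> B1 * void_prob M \<Phi> B2)
          \<longrightarrow> (\<forall>B. bdd_borel B \<longrightarrow>
                 void_prob M \<Phi> B \<ge> exp (- enn2real (mean_measure M \<Phi> B))))"
proof -
  interpret radon_point_process M \<Phi>
    using assms by unfold_locales
  show ?thesis
  proof (intro conjI impI allI; elim conjE)
    fix B :: "'a set"
    assume "simple_pp M \<Phi>" "radon_fact2 M \<Phi>" "bdd_borel B"
      and "\<forall>B1 B2. bdd_borel B1 \<longrightarrow> bdd_borel B2 \<longrightarrow> B1 \<inter> B2 = {} \<longrightarrow>
              void_prob2 M \<Phi> B1 B2 \<le> void_prob M \<Phi> B1 * void_prob M \<Phi> B2"
    then show "void_prob M \<Phi> B \<le> exp (- enn2real (mean_measure M \<Phi> B))"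
      by (intro void_prob_le_exp_neg_mean) auto
  next
    fix B :: "'a set"
    assume "diffuse_mean M \<Phi>" "bdd_borel B"
      and "\<forall>B1 B2. bdd_borel B1 \<longrightarrow> bdd_borel B2 \<longrightarrow> B1 \<inter> B2 = {} \<longrightarrow>
              void_prob2 M \<Phi> B1 B2 \<ge> void_prob M \<Phi> B1 * void_prob M \<Phi> B2"
    then show "exp (- enn2real (mean_measure M \<Phi> B)) \<le> void_prob M \<Phi> B"
      by (intro void_prob_ge_exp_neg_mean) auto
  qed
qed

end
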